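(* Let $n\le m$ be natural numbers with $n$ coprime to $m$. Then $\frac{m!}{(n-1)!}\leq\dim(W_{n,m})$.
   Context: $\mathbb{F}$ is a field of characteristic zero; $\mathbb{F}\langle X\rangle$ the free non-unitary associative algebra on $X=\{x_1,x_2,\dots\}$; $(x^n)^T$ the smallest ideal containing $x^n$ invariant under all algebra endomorphisms; $V_m$ the space of multilinear polynomials of degree $m$ in $x_1,\dots,x_m$; $W_{n,m}:=V_m\cap(x^n)^T$ (defined for $n\le m$). *)

theory Defs
  imports Complex_Main "HOL-Library.Function_Algebras"
begin

text \<open>Elements of the free non-unitary associative algebra F<X> on X = {x_1, x_2, ...}
  are represented by their coefficient functions on words (lists of variable indices):
  finitely supported, no constant term (empty word), and only letters i >= 1.\<close>

type_synonym 'a fpoly = "nat list \<Rightarrow> 'a"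

definition fsupp :: "'a::zero fpoly \<Rightarrow> nat list set" where
  "fsupp p = {w. p w \<noteq> 0}"

definition FX :: "'a::zero fpoly set" where
  "FX = {p. finite (fsupp p) \<and> p [] = 0 \<and> (\<forall>w \<in> fsupp p. 0 \<notin> set w)}"

definition pscale :: "'a::times \<Rightarrow> 'a fpoly \<Rightarrow> 'a fpoly" where
  "pscale c p = (\<lambda>w. c * p w)"

definition pmul :: "'a::comm_ring_1 fpoly \<Rightarrow> 'a fpoly \<Rightarrow> 'a fpoly" where
  "pmul p q = (\<lambda>w. \<Sum>k\<le>length w. p (take k w) * q (drop k w))"

definition mono :: "nat list \<Rightarrow> 'a::zero_neq_one fpoly" where
  "mono u = (\<lambda>w. if w = u then 1 else 0)"

fun word_eval :: "(nat \<Rightarrow> 'a::comm_ring_1 fpoly) \<Rightarrow> nat list \<Rightarrow> 'a fpoly" where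
  "word_eval \<sigma> [] = (\<lambda>_. 0)"
| "word_eval \<sigma> [i] = \<sigma> i"
| "word_eval \<sigma> (i # j # w) = pmul (\<sigma> i) (word_eval \<sigma> (j # w))"

definition subst :: "(nat \<Rightarrow> 'a::comm_ring_1 fpoly) \<Rightarrow> 'a fpoly \<Rightarrow> 'a fpoly" where
  "subst \<sigma> p = (\<lambda>v. \<Sum>w\<in>fsupp p. p w * word_eval \<sigma> w v)"

definition is_ideal :: "'a::comm_ring_1 fpoly set \<Rightarrow> bool" where
  "is_ideal I \<longleftrightarrow> I \<subseteq> FX \<and> (\<lambda>_. 0) \<in> I
     \<and> (\<forall>p\<in>I. \<forall>q\<in>I. (\<lambda>w. p w + q w) \<in> I)
     \<and> (\<forall>c. \<forall>p\<in>I. pscale c p \<in> I)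
     \<and> (\<forall>p\<in>I. \<forall>a\<in>FX. pmul a p \<in> I \<and> pmul p a \<in> I)"

definition is_T_ideal :: "'a::comm_ring_1 fpoly set \<Rightarrow> bool" where
  "is_T_ideal I \<longleftrightarrow> is_ideal I \<and> (\<forall>\<sigma>. (\<forall>i. \<sigma> i \<in> FX) \<longrightarrow> (\<forall>p\<in>I. subst \<sigma> p \<in> I))"

definition T_gen :: "'a::comm_ring_1 fpoly set \<Rightarrow> 'a fpoly set" where
  "T_gen S = \<Inter> {I. is_T_ideal I \<and> S \<subseteq> I}"

definition xpow :: "nat \<Rightarrow> 'a::comm_ring_1 fpoly" where
  "xpow n = mono (replicate n 1)"

definition Vm :: "nat \<Rightarrow> 'a::comm_ring_1 fpoly set" where
  "Vm m = {p \<in> FX. \<forall>w \<in> fsupp p. distinct w \<and> set w = {1..m}}"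

definition W :: "nat \<Rightarrow> nat \<Rightarrow> 'a::comm_ring_1 fpoly set" where
  "W n m = Vm m \<inter> T_gen {xpow n}"

end

theory Submission
  imports Defs "HOL-Library.Sublist" "HOL-Combinatorics.Multiset_Permutations"
begin

(* Put k = m - n + 1. For every word u of k distinct letters from {1..m}, substitute
   x := u + (sum of the x_r with r not in u) into x^n; these are n summands, and extracting
   by inclusion-exclusion the part in which each of them occurs exactly once yields the
   sum P_u (factor_poly u m) of all permutations of x_1 ... x_m that contain u as a factor.
   So P_u lies in W_{n,m}, and there are m!/(n-1)! such u.
   The P_u are linearly independent: if sum c_u P_u = 0, evaluate at the rotations of a
   permutation w starting with u. The coefficients of the k-letter windows read cyclically
   along w then have all sums of n consecutive terms equal to 0, so they are n-periodic;
   being also m-periodic with gcd(n, m) = 1, they are constant, hence 0 in characteristic 0. *)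

subsection \<open>Coefficient functions as a vector space\<close>

lemma sum_fun_apply: "(\<Sum>i\<in>A. f i) x = (\<Sum>i\<in>A. f i x)"
  by (induction A rule: infinite_finite_induct) auto

interpretation fpoly: vector_space "pscale :: 'a::field \<Rightarrow> 'a fpoly \<Rightarrow> 'a fpoly"
  by unfold_locales (auto simp: pscale_def fun_eq_iff algebra_simps)

context vector_space
begin

lemma independent_image_if_scalars_zero:
  assumes "finite U" and zero: "\<And>c. (\<Sum>u\<in>U. c u *s f u) = 0 \<Longrightarrow> \<forall>u\<in>U. c u = 0"
  shows "inj_on f U" "independent (f ` U)"
proof -
  show inj: "inj_on f U"
  proof (rule inj_onI, rule ccontr)
    fix u v assume uv: "u \<in> U" "v \<in> U" "f u = f v" "u \<noteq> v"
    define c where "c x = (if x = u then 1 else if x = v then -1 else 0 :: 'a)" for x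
    have "(\<Sum>x\<in>U. c x *s f x) = (\<Sum>x\<in>U. (if x = u then f u else 0) - (if x = v then f v else 0))"
      using uv by (intro sum.cong) (auto simp: c_def)
    also have "\<dots> = 0"
      using uv \<open>finite U\<close> by (simp add: sum_subtractf)
    finally have "c u = 0"
      using zero[of c] uv(1) by blast
    then show False
      by (simp add: c_def)
  qed
  show "independent (f ` U)"
  proof (rule independent_if_scalars_zero)
    fix g x assume "(\<Sum>x\<in>f ` U. g x *s x) = 0" "x \<in> f ` U"
    then show "g x = 0"
      using zero[of "g \<circ> f"] by (auto simp: sum.reindex[OF inj])
  qed (use \<open>finite U\<close> in simp)
qed

lemma card_le_dim_if_subset_finite_span:
  assumes "B \<subseteq> X" "independent B" "X \<subseteq> span M" "finite M"
  shows "card B \<le> dim X"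
proof -
  obtain A where A: "A \<subseteq> X" "independent A" "X \<subseteq> span A"
    using maximal_independent_subset by blast
  then have "finite A"
    using assms independent_span_bound[of M A] by (meson dual_order.trans span_superset)
  then have "card B \<le> card A"
    using assms(1,2) A(3) independent_span_bound by blast
  also have "card A = dim X"
    using A basis_card_eq_dim by blast
  finally show ?thesis .
qed

end

lemma Vm_subset_span: "Vm m \<subseteq> fpoly.span (mono ` permutations_of_set {1..m})"
proof
  fix p :: "'a fpoly" assume p: "p \<in> Vm m"
  have "p = (\<Sum>w\<in>permutations_of_set {1..m}. pscale (p w) (mono w))"
  proof
    fix x
    have "(\<Sum>w\<in>permutations_of_set {1..m}. pscale (p w) (mono w)) x
          = (if x \<in> permutations_of_set {1..m} then p x else 0)"
      by (simp add: sum_fun_apply pscale_def mono_def if_distrib[of "times _"] eq_commute[of x]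
          cong: if_cong)
    also have "\<dots> = p x"
      using p by (auto simp: Vm_def fsupp_def permutations_of_set_def)
    finally show "p x = (\<Sum>w\<in>permutations_of_set {1..m}. pscale (p w) (mono w)) x" ..
  qed
  also have "\<dots> \<in> fpoly.span (mono ` permutations_of_set {1..m})"
    by (intro fpoly.span_sum fpoly.span_scale fpoly.span_base) auto
  finally show "p \<in> fpoly.span (mono ` permutations_of_set {1..m})" .
qed

subsection \<open>Products and substitutions of sums of monomials\<close>

lemma sum_mono_eq_indicator:
  "finite A \<Longrightarrow> (\<Sum>w\<in>A. mono w) = (\<lambda>v. if v \<in> A then 1 else 0)"
  by (simp add: fun_eq_iff sum_fun_apply mono_def)

lemma pmul_mono_mono: "pmul (mono a) (mono b) = (mono (a @ b) :: 'a::comm_ring_1 fpoly)"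
proof
  fix w
  have "pmul (mono a) (mono b) w = (\<Sum>k\<le>length w. if k = length a \<and> a @ b = w then 1 else 0 :: 'a)"
    unfolding pmul_def mono_def
    by (rule sum.cong) (auto simp: append_eq_conv_conj)
  also have "\<dots> = mono (a @ b) w"
    by (auto simp: mono_def)
  finally show "pmul (mono a) (mono b) w = (mono (a @ b) w :: 'a)" .
qed

lemma pmul_sum_left: "pmul (\<Sum>i\<in>A. f i) q = (\<Sum>i\<in>A. pmul (f i) q)"
  by (simp add: fun_eq_iff pmul_def sum_fun_apply sum_distrib_right sum.swap[of _ A])

lemma pmul_sum_right: "pmul p (\<Sum>i\<in>A. f i) = (\<Sum>i\<in>A. pmul p (f i))"
  by (simp add: fun_eq_iff pmul_def sum_fun_apply sum_distrib_left sum.swap[of _ A])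

lemma word_eval_replicate_sum_mono:
  fixes z :: "nat \<Rightarrow> nat list"
  assumes "finite S"
  shows "word_eval (\<lambda>_. \<Sum>i\<in>S. mono (z i)) (replicate (Suc l) c)
           = (\<Sum>js\<in>{js. set js \<subseteq> S \<and> length js = Suc l}. mono (concat (map z js)) :: 'a::comm_ring_1 fpoly)"
proof (induction l)
  case 0
  have "{js. set js \<subseteq> S \<and> length js = Suc 0} = (\<lambda>i. [i]) ` S"
    by (auto simp: length_Suc_conv)
  then show ?case
    by (simp add: sum.reindex inj_on_def)
next
  case (Suc l)
  let ?L = "{js. set js \<subseteq> S \<and> length js = Suc l}"
  have "word_eval (\<lambda>_. \<Sum>i\<in>S. mono (z i)) (replicate (Suc (Suc l)) c)
        = (\<Sum>i\<in>S. \<Sum>js\<in>?L. mono (z i @ concat (map z js)) :: 'a fpoly)"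
    using Suc by (simp add: pmul_sum_left pmul_sum_right pmul_mono_mono) (rule sum.swap)
  also have "\<dots> = (\<Sum>(js, i)\<in>?L \<times> S. mono (concat (map z (i # js))))"
    by (subst sum.swap) (simp add: sum.cartesian_product)
  also have "\<dots> = (\<Sum>js\<in>{js. set js \<subseteq> S \<and> length js = Suc (Suc l)}. mono (concat (map z js)))"
    unfolding lists_length_Suc_eq[of S "Suc l"]
    by (subst sum.reindex) (auto simp: inj_on_def case_prod_beta)
  finally show ?case .
qed

lemma subst_xpow: "subst \<sigma> (xpow n) = word_eval \<sigma> (replicate n 1)"
proof -
  have "fsupp (xpow n :: 'a::comm_ring_1 fpoly) = {replicate n 1}"
    by (auto simp: fsupp_def xpow_def mono_def)
  then show ?thesis by (simp add: subst_def xpow_def mono_def)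
qed

subsection \<open>T-ideals and polarization\<close>

lemma fsupp_sum_subset: "fsupp (\<Sum>a\<in>A. f a) \<subseteq> (\<Union>a\<in>A. fsupp (f a))"
  by (auto simp: fsupp_def sum_fun_apply intro: sum.neutral)

lemma sum_in_FX:
  assumes "finite A" "\<And>a. a \<in> A \<Longrightarrow> f a \<in> FX"
  shows "(\<Sum>a\<in>A. f a) \<in> FX"
proof -
  have "finite (fsupp (\<Sum>a\<in>A. f a))"
    using assms by (intro finite_subset[OF fsupp_sum_subset]) (auto simp: FX_def)
  with assms fsupp_sum_subset[of f A] show ?thesis
    by (auto simp: FX_def sum_fun_apply)
qed

lemma mono_in_FX: "w \<noteq> [] \<Longrightarrow> 0 \<notin> set w \<Longrightarrow> mono w \<in> FX"
  by (auto simp: FX_def fsupp_def mono_def)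

lemma ideal_sum_pscale:
  assumes "is_ideal I" "finite A" "\<And>a. a \<in> A \<Longrightarrow> f a \<in> I"
  shows "(\<Sum>a\<in>A. pscale (c a) (f a)) \<in> I"
  using assms(2,3)
proof (induction A rule: finite_induct)
  case empty
  then show ?case using assms(1) by (simp add: is_ideal_def zero_fun_def)
next
  case (insert a A)
  then show ?case using assms(1) by (simp add: is_ideal_def plus_fun_def)
qed

lemma T_gen_subst: "(\<And>i. \<sigma> i \<in> FX) \<Longrightarrow> p \<in> T_gen S \<Longrightarrow> subst \<sigma> p \<in> T_gen S"
  by (auto simp: T_gen_def is_T_ideal_def)

lemma T_gen_sum_pscale:
  "finite A \<Longrightarrow> (\<And>a. a \<in> A \<Longrightarrow> f a \<in> T_gen S) \<Longrightarrow> (\<Sum>a\<in>A. pscale (c a) (f a)) \<in> T_gen S"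
  by (auto simp: T_gen_def is_T_ideal_def intro: ideal_sum_pscale)

lemma inclusion_exclusion_words:
  fixes f :: "'b list \<Rightarrow> 'a::comm_ring_1 fpoly"
  assumes "finite N"
  shows "(\<Sum>T\<in>Pow N. pscale ((-1) ^ (card N - card T)) (\<Sum>js\<in>{js. set js \<subseteq> T \<and> length js = l}. f js))
         = (\<Sum>js\<in>{js. set js = N \<and> length js = l}. f js)"
proof
  fix w
  have grouped: "(\<Sum>js\<in>{js. set js \<subseteq> T \<and> length js = l}. f js w)
        = (\<Sum>T'\<in>Pow T. \<Sum>js\<in>{js. set js = T' \<and> length js = l}. f js w)" if "finite T" for T
  proof -
    have "(\<Sum>js\<in>{js. set js \<subseteq> T \<and> length js = l}. f js w)
          = (\<Sum>T'\<in>Pow T. \<Sum>js\<in>{js \<in> {js. set js \<subseteq> T \<and> length js = l}. set js = T'}. f js w)"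
      by (rule sum.group[symmetric]) (use that finite_lists_length_eq in auto)
    also have "\<dots> = (\<Sum>T'\<in>Pow T. \<Sum>js\<in>{js. set js = T' \<and> length js = l}. f js w)"
      by (intro sum.cong refl arg_cong[where f = "\<lambda>A. sum _ A"]) auto
    finally show ?thesis .
  qed
  show "(\<Sum>T\<in>Pow N. pscale ((-1) ^ (card N - card T)) (\<Sum>js\<in>{js. set js \<subseteq> T \<and> length js = l}. f js)) w
        = (\<Sum>js\<in>{js. set js = N \<and> length js = l}. f js) w"
    by (simp add: sum_fun_apply pscale_def inclusion_exclusion_mobius[OF grouped assms])
qed

subsection \<open>Permutations containing a given factor\<close>

lemma inj_on_concat_map:
  assumes nonempty: "\<And>i. i \<in> N \<Longrightarrow> z i \<noteq> []" and heads: "inj_on (\<lambda>i. hd (z i)) N"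
  shows "inj_on (\<lambda>js. concat (map z js)) {js. set js \<subseteq> N}"
proof -
  have "js = js'" if "set js \<subseteq> N" "set js' \<subseteq> N" "concat (map z js) = concat (map z js')" for js js'
    using that
  proof (induction js arbitrary: js')
    case Nil
    then show ?case using nonempty by (cases js') auto
  next
    case (Cons i js)
    then obtain j js'' where js': "js' = j # js''"
      using nonempty by (cases js') auto
    with Cons.prems have eq: "z i @ concat (map z js) = z j @ concat (map z js'')" by simp
    moreover have "z i \<noteq> []" "z j \<noteq> []" using nonempty Cons.prems js' by auto
    ultimately have "hd (z i) = hd (z j)" by (metis hd_append2)
    with heads Cons.prems js' have "i = j" by (auto dest: inj_onD)
    with eq Cons js' show ?case by auto
  qed
  then show ?thesis by (auto intro: inj_onI)
qed

lemma length_le_if_distinct_subset: "distinct u \<Longrightarrow> set u \<subseteq> {1..m} \<Longrightarrow> length u \<le> m"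
  using card_mono[of "{1..m}" "set u"] by (simp add: distinct_card)

(* The letter 0 never occurs in F<X>; here it stands for the whole block u, so that the
   words over block_letters u m encode the words over {1..m} built from u and the other letters. *)
definition block :: "nat list \<Rightarrow> nat \<Rightarrow> nat list" where
  "block u i = (if i = 0 then u else [i])"

definition block_letters :: "nat list \<Rightarrow> nat \<Rightarrow> nat set" where
  "block_letters u m = insert 0 ({1..m} - set u)"

lemma finite_block_letters: "finite (block_letters u m)"
  by (simp add: block_letters_def)

lemma card_block_letters:
  "distinct u \<Longrightarrow> set u \<subseteq> {1..m} \<Longrightarrow> card (block_letters u m) = m + 1 - length u"
  using length_le_if_distinct_subset[of u m]
  by (simp add: block_letters_def card_Diff_subset distinct_card)

lemma concat_map_block: "0 \<notin> set js \<Longrightarrow> concat (map (block u) js) = js"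
  by (induction js) (auto simp: block_def)

lemma inj_on_concat_map_block:
  assumes "u \<noteq> []"
  shows "inj_on (\<lambda>js. concat (map (block u) js)) {js. set js \<subseteq> block_letters u m}"
proof (rule inj_on_concat_map)
  show "inj_on (\<lambda>i. hd (block u i)) (block_letters u m)"
    using assms hd_in_set[of u] by (auto simp: inj_on_def block_letters_def block_def)
qed (use assms in \<open>simp add: block_def\<close>)

lemma concat_map_block_in_permutations:
  assumes u: "distinct u" "set u \<subseteq> {1..m}"
    and js: "set js = block_letters u m" "length js = m + 1 - length u"
  shows "concat (map (block u) js) \<in> permutations_of_set {1..m}"
    and "sublist u (concat (map (block u) js))"
proof -
  have "distinct js"
    using js card_block_letters[OF u] by (simp add: card_distinct)
  moreover have "0 \<in> set js"
    using js by (simp add: block_letters_def)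
  moreover obtain A B where "js = A @ 0 # B"
    using \<open>0 \<in> set js\<close> split_list by metis
  ultimately have AB: "js = A @ 0 # B" "0 \<notin> set A" "0 \<notin> set B"
    by auto
  then have w: "concat (map (block u) js) = A @ u @ B"
    by (simp add: concat_map_block block_def)
  have "set A \<union> set B = set js - {0}"
    using AB by auto
  also have "\<dots> = {1..m} - set u"
    using js(1) by (auto simp: block_letters_def)
  finally have "set (A @ u @ B) = {1..m}"
    using u by auto
  moreover have "length (A @ u @ B) = m"
    using js AB u length_le_if_distinct_subset[OF u] by simp
  ultimately have "distinct (A @ u @ B)"
    by (metis card_atLeastAtMost card_distinct diff_Suc_1)
  with \<open>set (A @ u @ B) = {1..m}\<close> show "concat (map (block u) js) \<in> permutations_of_set {1..m}"
    by (auto simp: w permutations_of_set_def)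
  show "sublist u (concat (map (block u) js))"
    by (simp add: w)
qed

lemma permutation_with_factor_eq_concat_map_block:
  assumes u: "set u \<subseteq> {1..m}" and w: "w \<in> permutations_of_set {1..m}" "sublist u w"
  obtains js where "set js = block_letters u m" "length js = m + 1 - length u"
    and "w = concat (map (block u) js)"
proof -
  obtain A B where AB: "w = A @ u @ B"
    using w by (auto simp: sublist_def)
  have "0 \<notin> set w"
    using w(1) by (simp add: permutations_of_set_def)
  then have "0 \<notin> set A" "0 \<notin> set B"
    using AB by auto
  then have "w = concat (map (block u) (A @ 0 # B))"
    using AB by (simp add: concat_map_block block_def)
  moreover have "set (A @ 0 # B) = block_letters u m"
  proof -
    have "set A \<union> set B = set w - set u"
      using w(1) AB by (auto simp: permutations_of_set_def)
    moreover have "0 \<notin> set u"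
      using u by auto
    ultimately show ?thesis
      using w(1) by (simp add: block_letters_def permutations_of_set_def)
  qed
  moreover have "length (A @ 0 # B) = m + 1 - length u"
    using AB length_finite_permutations_of_set[OF w(1)] by simp
  ultimately show ?thesis
    using that by blast
qed

lemma bij_betw_concat_map_block:
  assumes "distinct u" "set u \<subseteq> {1..m}" "u \<noteq> []"
  shows "bij_betw (\<lambda>js. concat (map (block u) js))
           {js. set js = block_letters u m \<and> length js = m + 1 - length u}
           {w \<in> permutations_of_set {1..m}. sublist u w}"
  unfolding bij_betw_def
proof
  show "inj_on (\<lambda>js. concat (map (block u) js)) {js. set js = block_letters u m \<and> length js = m + 1 - length u}"
    by (rule inj_on_subset[OF inj_on_concat_map_block[OF assms(3)]]) auto
  show "(\<lambda>js. concat (map (block u) js)) ` {js. set js = block_letters u m \<and> length js = m + 1 - length u}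
        = {w \<in> permutations_of_set {1..m}. sublist u w}"
  proof (intro equalityI subsetI)
    fix w assume "w \<in> {w \<in> permutations_of_set {1..m}. sublist u w}"
    then obtain js where "set js = block_letters u m" "length js = m + 1 - length u"
      and "w = concat (map (block u) js)"
      using permutation_with_factor_eq_concat_map_block[OF assms(2)] by blast
    then show "w \<in> (\<lambda>js. concat (map (block u) js))
                 ` {js. set js = block_letters u m \<and> length js = m + 1 - length u}"
      by blast
  qed (use assms concat_map_block_in_permutations in auto)
qed

definition factor_poly :: "nat list \<Rightarrow> nat \<Rightarrow> 'a::comm_ring_1 fpoly" where
  "factor_poly u m = (\<Sum>w\<in>{w \<in> permutations_of_set {1..m}. sublist u w}. mono w)"

lemma factor_poly_apply:
  "factor_poly u m w = (if w \<in> permutations_of_set {1..m} \<and> sublist u w then 1 else 0)"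
  by (simp add: factor_poly_def sum_mono_eq_indicator)

lemma factor_poly_in_Vm:
  assumes "u \<noteq> []"
  shows "factor_poly u m \<in> Vm m"
proof -
  have "mono w \<in> FX" if "w \<in> {w \<in> permutations_of_set {1..m}. sublist u w}" for w
    using that assms by (intro mono_in_FX) (auto simp: permutations_of_set_def)
  then have "factor_poly u m \<in> FX"
    unfolding factor_poly_def by (intro sum_in_FX) auto
  moreover have "fsupp (factor_poly u m :: 'a fpoly) \<subseteq> permutations_of_set {1..m}"
    by (auto simp: fsupp_def factor_poly_apply)
  ultimately show ?thesis
    by (auto simp: Vm_def permutations_of_set_def)
qed

lemma factor_poly_in_T_gen:
  assumes u: "distinct u" "set u \<subseteq> {1..m}" "u \<noteq> []"
  shows "factor_poly u m \<in> T_gen {xpow (m + 1 - length u)}"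
proof -
  define N where "N = block_letters u m"
  define n where "n = m + 1 - length u"
  have n: "n = Suc (m - length u)"
    using length_le_if_distinct_subset[OF u(1,2)] by (simp add: n_def)
  have "(\<Sum>js\<in>{js. set js \<subseteq> T \<and> length js = n}. mono (concat (map (block u) js)) :: 'a fpoly)
          \<in> T_gen {xpow n}" if "T \<subseteq> N" for T
  proof -
    have "finite T"
      using finite_subset[OF that[unfolded N_def] finite_block_letters] .
    have "block u i \<noteq> []" "0 \<notin> set (block u i)" if "i \<in> T" for i
      using u \<open>T \<subseteq> N\<close> that by (auto simp: block_def N_def block_letters_def)
    then have "(\<Sum>i\<in>T. mono (block u i)) \<in> FX"
      by (intro sum_in_FX mono_in_FX \<open>finite T\<close>)
    then have "subst (\<lambda>_. \<Sum>i\<in>T. mono (block u i)) (xpow n) \<in> T_gen {xpow n}"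
      by (intro T_gen_subst) (auto simp: T_gen_def)
    then show ?thesis
      unfolding n subst_xpow word_eval_replicate_sum_mono[OF \<open>finite T\<close>] .
  qed
  then have "(\<Sum>T\<in>Pow N. pscale ((-1) ^ (card N - card T))
               (\<Sum>js\<in>{js. set js \<subseteq> T \<and> length js = n}. mono (concat (map (block u) js))) :: 'a fpoly)
             \<in> T_gen {xpow n}"
    by (intro T_gen_sum_pscale) (auto simp: N_def finite_block_letters)
  also have "(\<Sum>T\<in>Pow N. pscale ((-1) ^ (card N - card T))
               (\<Sum>js\<in>{js. set js \<subseteq> T \<and> length js = n}. mono (concat (map (block u) js))))
             = (\<Sum>js\<in>{js. set js = N \<and> length js = n}. mono (concat (map (block u) js)) :: 'a fpoly)"
    by (rule inclusion_exclusion_words[where f = "\<lambda>js. mono (concat (map (block u) js))"])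
      (simp add: N_def finite_block_letters)
  also have "\<dots> = factor_poly u m"
    unfolding factor_poly_def N_def n_def
    by (rule sum.reindex_bij_betw[OF bij_betw_concat_map_block[OF u]])
  finally show ?thesis
    by (simp add: n_def)
qed

definition distinct_words :: "nat \<Rightarrow> nat \<Rightarrow> nat list set" where
  "distinct_words m k = {u. length u = k \<and> distinct u \<and> set u \<subseteq> {1..m}}"

lemma finite_distinct_words: "finite (distinct_words m k)"
  unfolding distinct_words_def
  by (rule finite_subset[OF _ finite_lists_length_eq[of "{1..m}" k]]) auto

lemma card_distinct_words: "k \<le> m \<Longrightarrow> card (distinct_words m k) = \<Prod>{m - k + 1..m}"
  using card_lists_distinct_length_eq[of "{1..m}" k] by (simp add: distinct_words_def)

lemma factor_polys_in_W:
  assumes "0 < n" "n \<le> m"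
  shows "(\<lambda>u. factor_poly u m) ` distinct_words m (m + 1 - n) \<subseteq> W n m"
proof
  fix p assume "p \<in> (\<lambda>u. factor_poly u m) ` distinct_words m (m + 1 - n)"
  then obtain u where u: "distinct u" "set u \<subseteq> {1..m}" "length u = m + 1 - n"
    and p: "p = factor_poly u m"
    by (auto simp: distinct_words_def)
  then have "u \<noteq> []" "m + 1 - length u = n"
    using assms by auto
  then have "p \<in> Vm m" "p \<in> T_gen {xpow n}"
    using p factor_poly_in_Vm factor_poly_in_T_gen[OF u(1,2)] by metis+
  then show "p \<in> W n m"
    by (simp add: W_def)
qed

subsection \<open>Linear independence via cyclic windows\<close>

lemma sublist_iff_window:
  "sublist u w \<longleftrightarrow> (\<exists>j. j + length u \<le> length w \<and> u = take (length u) (drop j w))"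
proof
  assume "sublist u w"
  then obtain A B where "w = A @ u @ B" by (auto simp: sublist_def)
  then show "\<exists>j. j + length u \<le> length w \<and> u = take (length u) (drop j w)"
    by (intro exI[of _ "length A"]) simp
next
  assume "\<exists>j. j + length u \<le> length w \<and> u = take (length u) (drop j w)"
  then obtain j where "u = take (length u) (drop j w)" by blast
  then have "w = take j w @ u @ drop (length u) (drop j w)"
    by (metis append_take_drop_id)
  then show "sublist u w" by (metis sublist_appendI)
qed

lemma inj_on_windows:
  assumes "distinct w" "0 < k"
  shows "inj_on (\<lambda>j. take k (drop j w)) {j. j + k \<le> length w}"
proof (rule inj_onI)
  fix i j assume ij: "i \<in> {j. j + k \<le> length w}" "j \<in> {j. j + k \<le> length w}"
    and "take k (drop i w) = take k (drop j w)"
  then have "take k (drop i w) ! 0 = take k (drop j w) ! 0"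
    by simp
  then have "w ! i = w ! j"
    using ij assms(2) by simp
  then show "i = j"
    using assms ij by (simp add: nth_eq_iff_index_eq)
qed

lemma sum_factor_poly_apply:
  fixes c :: "nat list \<Rightarrow> 'a::comm_ring_1"
  assumes w: "w \<in> permutations_of_set {1..m}" and "0 < k"
  shows "(\<Sum>u\<in>distinct_words m k. c u * factor_poly u m w) = (\<Sum>j | j + k \<le> m. c (take k (drop j w)))"
proof -
  have len: "length w = m"
    using length_finite_permutations_of_set[OF w] by simp
  let ?windows = "(\<lambda>j. take k (drop j w)) ` {j. j + k \<le> m}"
  have windows: "?windows \<subseteq> distinct_words m k"
    using w len
    by (auto simp: distinct_words_def permutations_of_set_def dest: in_set_takeD in_set_dropD)
  have "(\<Sum>u\<in>distinct_words m k. c u * factor_poly u m w)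
        = (\<Sum>u\<in>distinct_words m k. if u \<in> ?windows then c u else 0)"
    using w len
    by (intro sum.cong refl) (auto simp: factor_poly_apply sublist_iff_window distinct_words_def)
  also have "\<dots> = sum c ?windows"
    using windows by (simp add: sum.inter_restrict[OF finite_distinct_words, symmetric] Int_absorb1)
  also have "\<dots> = (\<Sum>j | j + k \<le> m. c (take k (drop j w)))"
    using inj_on_windows[of w k] w len assms(2) by (simp add: sum.reindex permutations_of_set_def)
  finally show ?thesis .
qed

lemma periodic_if_window_sums_zero:
  fixes a :: "nat \<Rightarrow> 'a::comm_monoid_add"
  assumes "\<And>t. (\<Sum>j<n. a (t + j)) = 0"
  shows "a (t + n) = a t"
proof -
  have "a (t + n) = (\<Sum>j<Suc n. a (t + j))"
    using assms[of t] by simp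
  also have "\<dots> = a t"
    using assms[of "Suc t"] by (simp add: sum.lessThan_Suc_shift del: sum.lessThan_Suc)
  finally show ?thesis .
qed

lemma constant_if_coprime_periods:
  fixes a :: "nat \<Rightarrow> 'a" and n m :: nat
  assumes n: "\<And>t. a (t + n) = a t" and m: "\<And>t. a (t + m) = a t"
    and "coprime n m" "n \<noteq> 0"
  shows "a t = a 0"
proof -
  have multiple: "a (t + i * p) = a t" if "\<And>t. a (t + p) = a t" for p i t
    using that by (induction i arbitrary: t) (simp_all add: add.assoc[symmetric])
  obtain x y where "n * x = m * y + 1"
    using bezout_nat[of n m] \<open>coprime n m\<close> \<open>n \<noteq> 0\<close> by auto
  then have "a (s + 1) = a s" for s
    using multiple[OF n, of s x] multiple[OF m, of "s + 1" y] by (simp add: ac_simps)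
  then show ?thesis
    by (induction t) simp_all
qed

lemma take_rotate: "j + k \<le> length xs \<Longrightarrow> take k (rotate j xs) = take k (drop j xs)"
  by (cases "j = length xs") (simp_all add: rotate_drop_take)

lemma coeff_zero_if_window_sums_zero:
  fixes c :: "nat list \<Rightarrow> 'a::field_char_0"
  assumes nk: "n + k = m + 1" and "0 < n" "coprime n m"
    and windows: "\<And>w. w \<in> permutations_of_set {1..m} \<Longrightarrow> (\<Sum>j<n. c (take k (drop j w))) = 0"
    and u: "u \<in> distinct_words m k"
  shows "c u = 0"
proof -
  define w0 where "w0 = u @ sorted_list_of_set ({1..m} - set u)"
  have w0: "w0 \<in> permutations_of_set {1..m}" and "take k w0 = u"
    using u by (auto simp: w0_def permutations_of_set_def distinct_words_def)
  have len: "length w0 = m"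
    using length_finite_permutations_of_set[OF w0] by simp
  define a where "a t = c (take k (rotate t w0))" for t
  have window_sums: "(\<Sum>j<n. a (t + j)) = 0" for t
  proof -
    have "take k (drop j (rotate t w0)) = take k (rotate (t + j) w0)" if "j < n" for j
      using that nk len by (simp flip: take_rotate rotate_rotate add: add.commute)
    then have "(\<Sum>j<n. a (t + j)) = (\<Sum>j<n. c (take k (drop j (rotate t w0))))"
      by (simp add: a_def)
    also have "\<dots> = 0"
      using w0 by (intro windows) (simp add: permutations_of_set_def)
    finally show ?thesis .
  qed
  then have "a (t + n) = a t" for t
    by (rule periodic_if_window_sums_zero)
  moreover have "a (t + m) = a t" for t
    unfolding a_def by (metis len rotate_conv_mod mod_add_self2)
  ultimately have const: "a t = a 0" for t
    using constant_if_coprime_periods \<open>coprime n m\<close> \<open>0 < n\<close> by blast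
  have "(\<Sum>j<n. a (0 + j)) = (\<Sum>j<n. a 0)"
    by (rule sum.cong[OF refl const])
  then have "of_nat n * a 0 = 0"
    using window_sums[of 0] by simp
  with \<open>0 < n\<close> \<open>take k w0 = u\<close> show "c u = 0"
    by (simp add: a_def)
qed

lemma factor_polys_independent:
  assumes "0 < n" "n \<le> m" "coprime n m"
  shows "inj_on (\<lambda>u. factor_poly u m :: 'a::field_char_0 fpoly) (distinct_words m (m + 1 - n))"
    and "fpoly.independent ((\<lambda>u. factor_poly u m :: 'a fpoly) ` distinct_words m (m + 1 - n))"
proof -
  let ?k = "m + 1 - n"
  have scalars_zero: "\<forall>u\<in>distinct_words m ?k. c u = 0"
    if zero: "(\<Sum>u\<in>distinct_words m ?k. pscale (c u) (factor_poly u m :: 'a fpoly)) = 0" for c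
  proof
    fix u assume u: "u \<in> distinct_words m ?k"
    have "(\<Sum>j<n. c (take ?k (drop j w))) = 0" if w: "w \<in> permutations_of_set {1..m}" for w
    proof -
      have "{j. j + ?k \<le> m} = {..<n}"
        using assms by auto
      then have "(\<Sum>j<n. c (take ?k (drop j w))) = (\<Sum>u\<in>distinct_words m ?k. c u * factor_poly u m w)"
        using sum_factor_poly_apply[OF w, of ?k c] assms by simp
      also have "\<dots> = 0"
        using fun_cong[OF zero, of w] by (simp add: sum_fun_apply pscale_def)
      finally show ?thesis .
    qed
    then show "c u = 0"
      using coeff_zero_if_window_sums_zero[of n ?k m c u] assms u by simp
  qed
  show "inj_on (\<lambda>u. factor_poly u m :: 'a fpoly) (distinct_words m ?k)"
    by (rule fpoly.independent_image_if_scalars_zero(1)[OF finite_distinct_words scalars_zero])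
  show "fpoly.independent ((\<lambda>u. factor_poly u m :: 'a fpoly) ` distinct_words m ?k)"
    by (rule fpoly.independent_image_if_scalars_zero(2)[OF finite_distinct_words scalars_zero])
qed

theorem proposition5p5:
  fixes n m :: nat
  assumes "1 \<le> n" and "n \<le> m" and "coprime n m"
  shows "real (fact m) / real (fact (n - 1))
           \<le> real (vector_space.dim (pscale :: 'a::field_char_0 \<Rightarrow> 'a fpoly \<Rightarrow> 'a fpoly) (W n m))"
proof -
  let ?P = "(\<lambda>u. factor_poly u m :: 'a fpoly) ` distinct_words m (m + 1 - n)"
  have "?P \<subseteq> W n m"
    using assms by (intro factor_polys_in_W) auto
  moreover have "(W n m :: 'a fpoly set) \<subseteq> fpoly.span (mono ` permutations_of_set {1..m})"
    using Vm_subset_span by (auto simp: W_def)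
  moreover have "fpoly.independent ?P"
    and "inj_on (\<lambda>u. factor_poly u m :: 'a fpoly) (distinct_words m (m + 1 - n))"
    using assms by (intro factor_polys_independent; simp)+
  ultimately have "card (distinct_words m (m + 1 - n)) \<le> fpoly.dim (W n m :: 'a fpoly set)"
    using fpoly.card_le_dim_if_subset_finite_span[of ?P] by (simp add: card_image)
  moreover have "card (distinct_words m (m + 1 - n)) = fact m div fact (n - 1)"
    using assms by (simp add: card_distinct_words fact_div_fact)
  moreover have "fact (n - 1) dvd (fact m :: nat)"
    using assms by (simp add: fact_dvd)
  ultimately show ?thesis
    by (metis of_nat_le_iff real_of_nat_div)
qed

end
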